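(* Let $S$ be a HeyVL program and let $S'$ be a subprogram obtained from $S$ by only erasing (replacing by $\mathtt{skip}$) occurrences of statements that are reductive. Then for all expectations $X,Y$: if $\not\models\{X\}\,S'\,\{Y\}$, then $S'$ is an error-witnessing slice of $S$ with respect to $(X,Y)$. Moreover, $\mathrm{vp}[S](Z)\preceq\mathrm{vp}[S'](Z)$ for every expectation $Z$.
   Context: Expectations are functions $X:\mathsf{States}\to[0,\infty]$ on program states, ordered pointwise ($X\preceq Y$ iff $X(\sigma)\le Y(\sigma)$ for all $\sigma$). HeyVL statements and their verification pre-expectation transformer $\mathrm{vp}[S]$ (mapping expectations to expectations) are: probabilistic assignment $x :\approx p_1\cdot t_1+\dots+p_n\cdot t_n$ (a finite-support distribution) with $\mathrm{vp}(X)=\sum_i p_i\cdot X[x/t_i]$, deterministic assignment $x:=a$ with $\mathrm{vp}(X)=X[x/a]$; $\mathtt{reward}\ a$: $X+a$; $S_1;S_2$: $\mathrm{vp}[S_1](\mathrm{vp}[S_2](X))$; demonic choice $\mathtt{if}(\sqcap)\{S_1\}\mathtt{else}\{S_2\}$: $\min(\mathrm{vp}[S_1](X),\mathrm{vp}[S_2](X))$; angelic choice $\mathtt{if}(\sqcup)$: the pointwise max; $\mathtt{assert}\ Y$: $\min(Y,X)$; $\mathtt{coassert}\ Y$: $\max(Y,X)$; $\mathtt{assume}\ Y$: the expectation equal to $\infty$ where $Y\le X$ and to $X$ elsewhere; $\mathtt{coassume}\ Y$: equal to $0$ where $Y\ge X$ and to $X$ elsewhere; $\mathtt{havoc}\ x$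 / $\mathtt{cohavoc}\ x$: pointwise infimum / supremum of $X$ over all values of $x$; $\mathtt{validate}$: $\infty$ where $X=\infty$, $0$ elsewhere; $\mathtt{covalidate}$: $0$ where $X=0$, $\infty$ elsewhere. $\mathtt{skip}$ has $\mathrm{vp}[\mathtt{skip}](X)=X$. A statement $S$ is reductive if $\mathrm{vp}[S](X)\preceq X$ for all $X$. For a state $\sigma$, write $\sigma\models\{X\}S\{Y\}$ iff $X(\sigma)\le\mathrm{vp}[S](Y)(\sigma)$, and $\models\{X\}S\{Y\}$ iff this holds for all $\sigma$ (i.e. $X\preceq\mathrm{vp}[S](Y)$). A subprogram $P$ of $S$ is an error-witnessing slice of $S$ w.r.t. $(X,Y)$ if (1) $\not\models\{X\}P\{Y\}$ and (2) for every state $\sigma'$, $\sigma'\not\models\{X\}P\{Y\}$ implies $\sigma'\not\models\{X\}S\{Y\}$. *)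

theory Defs
  imports "HOL-Library.Extended_Nonnegative_Real"
begin

type_synonym ('v,'d) state = "'v \<Rightarrow> 'd"
type_synonym ('v,'d) expect = "('v,'d) state \<Rightarrow> ennreal"

datatype ('v,'d) heyvl =
    ProbAssign 'v "(ennreal \<times> (('v,'d) state \<Rightarrow> 'd)) list"
  | Assign 'v "('v,'d) state \<Rightarrow> 'd"
  | Reward "('v,'d) expect"
  | Seq "('v,'d) heyvl" "('v,'d) heyvl"
  | Demonic "('v,'d) heyvl" "('v,'d) heyvl"
  | Angelic "('v,'d) heyvl" "('v,'d) heyvl"
  | Assert "('v,'d) expect"
  | Coassert "('v,'d) expect"
  | Assume "('v,'d) expect"
  | Coassume "('v,'d) expect"
  | Havoc 'v
  | Cohavoc 'v
  | Validate
  | Covalidate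
  | Skip

fun vp :: "('v,'d) heyvl \<Rightarrow> ('v,'d) expect \<Rightarrow> ('v,'d) expect" where
  "vp (ProbAssign x ds) X = (\<lambda>\<sigma>. (\<Sum>(p,t)\<leftarrow>ds. p * X (\<sigma>(x := t \<sigma>))))"
| "vp (Assign x a) X = (\<lambda>\<sigma>. X (\<sigma>(x := a \<sigma>)))"
| "vp (Reward a) X = (\<lambda>\<sigma>. X \<sigma> + a \<sigma>)"
| "vp (Seq S1 S2) X = vp S1 (vp S2 X)"
| "vp (Demonic S1 S2) X = (\<lambda>\<sigma>. min (vp S1 X \<sigma>) (vp S2 X \<sigma>))"
| "vp (Angelic S1 S2) X = (\<lambda>\<sigma>. max (vp S1 X \<sigma>) (vp S2 X \<sigma>))"
| "vp (Assert Y) X = (\<lambda>\<sigma>. min (Y \<sigma>) (X \<sigma>))"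
| "vp (Coassert Y) X = (\<lambda>\<sigma>. max (Y \<sigma>) (X \<sigma>))"
| "vp (Assume Y) X = (\<lambda>\<sigma>. if Y \<sigma> \<le> X \<sigma> then \<infinity> else X \<sigma>)"
| "vp (Coassume Y) X = (\<lambda>\<sigma>. if Y \<sigma> \<ge> X \<sigma> then 0 else X \<sigma>)"
| "vp (Havoc x) X = (\<lambda>\<sigma>. INF v. X (\<sigma>(x := v)))"
| "vp (Cohavoc x) X = (\<lambda>\<sigma>. SUP v. X (\<sigma>(x := v)))"
| "vp Validate X = (\<lambda>\<sigma>. if X \<sigma> = \<infinity> then \<infinity> else 0)"
| "vp Covalidate X = (\<lambda>\<sigma>. if X \<sigma> = 0 then 0 else \<infinity>)"
| "vp Skip X = X"

fun wf_heyvl :: "('v,'d) heyvl \<Rightarrow> bool" where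
  "wf_heyvl (ProbAssign x ds) = (sum_list (map fst ds) = 1)"
| "wf_heyvl (Seq S1 S2) = (wf_heyvl S1 \<and> wf_heyvl S2)"
| "wf_heyvl (Demonic S1 S2) = (wf_heyvl S1 \<and> wf_heyvl S2)"
| "wf_heyvl (Angelic S1 S2) = (wf_heyvl S1 \<and> wf_heyvl S2)"
| "wf_heyvl _ = True"

definition reductive :: "('v,'d) heyvl \<Rightarrow> bool" where
  "reductive S \<longleftrightarrow> (\<forall>X. vp S X \<le> X)"

definition sat_at :: "('v,'d) state \<Rightarrow> ('v,'d) expect \<Rightarrow> ('v,'d) heyvl \<Rightarrow> ('v,'d) expect \<Rightarrow> bool" where
  "sat_at \<sigma> X S Y \<longleftrightarrow> X \<sigma> \<le> vp S Y \<sigma>"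

definition valid :: "('v,'d) expect \<Rightarrow> ('v,'d) heyvl \<Rightarrow> ('v,'d) expect \<Rightarrow> bool" where
  "valid X S Y \<longleftrightarrow> (\<forall>\<sigma>. sat_at \<sigma> X S Y)"

inductive erases :: "('v,'d) heyvl \<Rightarrow> ('v,'d) heyvl \<Rightarrow> bool" where
  refl: "erases S S"
| erase: "reductive S \<Longrightarrow> erases S Skip"
| seq: "erases S1 S1' \<Longrightarrow> erases S2 S2' \<Longrightarrow> erases (Seq S1 S2) (Seq S1' S2')"
| demonic: "erases S1 S1' \<Longrightarrow> erases S2 S2' \<Longrightarrow> erases (Demonic S1 S2) (Demonic S1' S2')"
| angelic: "erases S1 S1' \<Longrightarrow> erases S2 S2' \<Longrightarrow> erases (Angelic S1 S2) (Angelic S1' S2')"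

definition error_witnessing_slice ::
  "('v,'d) heyvl \<Rightarrow> ('v,'d) heyvl \<Rightarrow> ('v,'d) expect \<Rightarrow> ('v,'d) expect \<Rightarrow> bool" where
  "error_witnessing_slice P S X Y \<longleftrightarrow>
     \<not> valid X P Y \<and> (\<forall>\<sigma>'. \<not> sat_at \<sigma>' X P Y \<longrightarrow> \<not> sat_at \<sigma>' X S Y)"

end

(* Every vp[S] is monotone, and erasing a reductive statement T can only raise its
   pre-expectation: vp[T] Z \<le> Z = vp[skip] Z.
   Monotonicity carries this inequality through sequencing and both choices, so
   vp[S] \<le> vp[S'] pointwise; hence every state refuting {X} S' {Y} also refutes {X} S {Y}. *)
theory Submission
  imports Defs
begin

lemma pointwise_min_mono:
  "f \<le> f' \<Longrightarrow> g \<le> g' \<Longrightarrow> (\<lambda>x. min (f x) (g x)) \<le> (\<lambda>x. min (f' x) (g' x :: 'a::linorder))"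
  unfolding le_fun_def by (blast intro: min.mono)

lemma pointwise_max_mono:
  "f \<le> f' \<Longrightarrow> g \<le> g' \<Longrightarrow> (\<lambda>x. max (f x) (g x)) \<le> (\<lambda>x. max (f' x) (g' x :: 'a::linorder))"
  unfolding le_fun_def by (blast intro: max.mono)

lemma vp_mono: "X \<le> X' \<Longrightarrow> vp S X \<le> vp S X'"
proof (induction S arbitrary: X X')
  case (ProbAssign x ds)
  then show ?case
    by (auto simp: le_fun_def intro!: sum_list_mono mult_left_mono)
next
  case (Seq S1 S2)
  then show ?case by simp
next
  case (Demonic S1 S2)
  then show ?case by (simp add: pointwise_min_mono)
next
  case (Angelic S1 S2)
  then show ?case by (simp add: pointwise_max_mono)
next
  case (Assert Y)
  then show ?case by (simp add: pointwise_min_mono)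
next
  case (Coassert Y)
  then show ?case by (simp add: pointwise_max_mono)
next
  case Validate
  then show ?case by (auto simp: le_fun_def) (metis top_unique)
next
  case Covalidate
  then show ?case by (auto simp: le_fun_def) (metis le_zero_eq)
qed (auto simp: le_fun_def add_right_mono intro: order_trans INF_mono SUP_mono)

lemma vp_le_if_erases: "erases S S' \<Longrightarrow> vp S Z \<le> vp S' Z"
proof (induction arbitrary: Z rule: erases.induct)
  case (erase S)
  then show ?case by (simp add: reductive_def)
next
  case (seq S1 S1' S2 S2')
  have "vp S1 (vp S2 Z) \<le> vp S1 (vp S2' Z)" by (rule vp_mono) (rule seq.IH)
  also have "\<dots> \<le> vp S1' (vp S2' Z)" by (rule seq.IH)
  finally show ?case by simp
next
  case (demonic S1 S1' S2 S2')
  then show ?case by (simp add: pointwise_min_mono)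
next
  case (angelic S1 S1' S2 S2')
  then show ?case by (simp add: pointwise_max_mono)
qed simp

lemma error_witnessing_slice_if_vp_le:
  assumes "\<And>Z. vp S Z \<le> vp P Z" and "\<not> valid X P Y"
  shows "error_witnessing_slice P S X Y"
  using assms unfolding error_witnessing_slice_def sat_at_def
  by (auto simp: le_fun_def intro: order_trans)

theorem theorem2:
  fixes S S' :: "('v,'d) heyvl"
  assumes "wf_heyvl S"
    and "erases S S'"
  shows "(\<forall>X Y. \<not> valid X S' Y \<longrightarrow> error_witnessing_slice S' S X Y)
         \<and> (\<forall>Z. vp S Z \<le> vp S' Z)"
proof -
  have "\<And>Z. vp S Z \<le> vp S' Z"
    using assms(2) by (rule vp_le_if_erases)
  then show ?thesis
    using error_witnessing_slice_if_vp_le by blast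
qed

end
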